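(* Let $m\geq 1$ and $n\geq 3$ be integers. For all vertices $i,j$ of the oriented Dutch windmill graph $D^m_n$, the number of walks in $D^m_n$ of length $2n-1$ from $i$ to $j$ is exactly $m$ times the number of walks of length $n-1$ from $i$ to $j$.
   Context: For integers $m\geq 1$, $n\geq 3$, the oriented Dutch windmill graph $D^m_n$ is the directed graph with vertex set $V=\{1,2,\ldots,m(n-1)+1\}$ whose directed edges $(a,b)$ are exactly: $(1,(k-1)(n-1)+2)$ for $k\in\{1,\ldots,m\}$; $((k-1)(n-1)+i,(k-1)(n-1)+i+1)$ for $k\in\{1,\ldots,m\}$ and $i\in\{2,\ldots,n-1\}$; and $((k-1)(n-1)+n,1)$ for $k\in\{1,\ldots,m\}$. A walk is a sequence of vertices $\langle v_1,\ldots,v_r\rangle$ in which each $(v_t,v_{t+1})$ is an edge; its length is $r-1$; walks are distinct when they are distinct sequences. *)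

theory Defs
  imports Main
begin

definition windmill_verts :: "nat \<Rightarrow> nat \<Rightarrow> nat set" where
  "windmill_verts m n = {1 .. m * (n - 1) + 1}"

definition windmill_edges :: "nat \<Rightarrow> nat \<Rightarrow> (nat \<times> nat) set" where
  "windmill_edges m n =
     {(1, (k - 1) * (n - 1) + 2) | k. k \<in> {1..m}}
   \<union> {((k - 1) * (n - 1) + i, (k - 1) * (n - 1) + i + 1) | k i. k \<in> {1..m} \<and> i \<in> {2..n-1}}
   \<union> {((k - 1) * (n - 1) + n, 1) | k. k \<in> {1..m}}"

definition is_walk :: "(nat \<times> nat) set \<Rightarrow> nat list \<Rightarrow> bool" where
  "is_walk E vs \<longleftrightarrow> vs \<noteq> [] \<and> (\<forall>t. Suc t < length vs \<longrightarrow> (vs ! t, vs ! Suc t) \<in> E)"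

definition walks :: "(nat \<times> nat) set \<Rightarrow> nat \<Rightarrow> nat \<Rightarrow> nat \<Rightarrow> nat list set" where
  "walks E l i j = {vs. is_walk E vs \<and> length vs = l + 1 \<and> hd vs = i \<and> last vs = j}"

end

theory Submission
  imports Defs
begin

text \<open>Every vertex other than the hub 1 has a unique successor, and a vertex at distance
  d \<le> n - 1 from the hub reaches it after exactly d steps; hence walks of length L + d from that
  vertex correspond to walks of length L from the hub. The hub has one successor on each of the
  m blades, each at distance n - 1, so walks of length L + n from the hub number m times those
  of length L. Taking L = n - 1 - d gives the claim.\<close>

lemma is_walk_Cons_Cons [simp]:
  "is_walk E (x # y # ys) \<longleftrightarrow> (x, y) \<in> E \<and> is_walk E (y # ys)"
  unfolding is_walk_def by (auto simp: less_Suc_eq_0_disj)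

lemma walks_0: "walks E 0 i j = (if i = j then {[i]} else {})"
  by (auto simp: walks_def is_walk_def length_Suc_conv)

lemma walks_Suc: "walks E (Suc L) i j = (\<Union>v \<in> E `` {i}. (#) i ` walks E L v j)"
proof -
  have "xs \<in> walks E (Suc L) i j \<longleftrightarrow> (\<exists>v ys. (i, v) \<in> E \<and> ys \<in> walks E L v j \<and> xs = i # ys)"
    for xs
    by (auto simp: walks_def length_Suc_conv)
  then show ?thesis by blast
qed

lemma finite_walks:
  assumes "finite E"
  shows "finite (walks E L i j)"
  using assms by (induction L arbitrary: i) (simp_all add: walks_0 walks_Suc)

lemma card_walks_Suc:
  assumes "finite E"
  shows "card (walks E (Suc L) i j) = (\<Sum>v \<in> E `` {i}. card (walks E L v j))"
proof -
  have "card (walks E (Suc L) i j) = (\<Sum>v \<in> E `` {i}. card ((#) i ` walks E L v j))"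
    unfolding walks_Suc
  proof (rule card_UN_disjoint)
    show "finite (E `` {i})" and "\<forall>v \<in> E `` {i}. finite ((#) i ` walks E L v j)"
      using assms by (simp_all add: finite_walks)
    show "\<forall>v \<in> E `` {i}. \<forall>w \<in> E `` {i}. v \<noteq> w \<longrightarrow> (#) i ` walks E L v j \<inter> (#) i ` walks E L w j = {}"
      by (auto simp: walks_def)
  qed
  also have "\<dots> = (\<Sum>v \<in> E `` {i}. card (walks E L v j))"
    by (simp add: card_image)
  finally show ?thesis .
qed

corollary card_walks_Suc_unique_successor:
  assumes "finite E" "E `` {i} = {v}"
  shows "card (walks E (Suc L) i j) = card (walks E L v j)"
  using card_walks_Suc[OF assms(1)] assms(2) by simp

lemma mult_add_eq_mult_add_imp_eq:
  fixes K K' c r r' :: nat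
  assumes "K * c + r = K' * c + r'" "r < c" "r' < c"
  shows "K = K' \<and> r = r'"
proof -
  have "(K * c + r) div c = (K' * c + r') div c" "(K * c + r) mod c = (K' * c + r') mod c"
    by (simp_all only: assms(1))
  with assms(2,3) show ?thesis by simp
qed

lemma finite_windmill_edges: "finite (windmill_edges m n)"
  unfolding windmill_edges_def
  by (intro finite_UnI finite_image_set finite_image_set2) auto

lemma ex_atLeastAtMost_1_shift: "(\<exists>k. k \<in> {1..m} \<and> P (k - 1)) \<longleftrightarrow> (\<exists>K < m. P (K :: nat))"
proof
  assume "\<exists>k. k \<in> {1..m} \<and> P (k - 1)"
  then obtain k where "k \<in> {1..m}" "P (k - 1)" by blast
  then show "\<exists>K < m. P K" by (intro exI[of _ "k - 1"]) auto
next
  assume "\<exists>K < m. P K"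
  then obtain K where "K < m" "P K" by blast
  then show "\<exists>k. k \<in> {1..m} \<and> P (k - 1)" by (intro exI[of _ "Suc K"]) auto
qed

text \<open>With c = n - 1, blade K (counted from 0) consists of the vertices K * c + p for
  2 \<le> p \<le> c + 1, and K * c + p is at distance c + 2 - p from the hub.\<close>

lemma mem_windmill_edges:
  "(a, b) \<in> windmill_edges m (Suc c) \<longleftrightarrow>
     (\<exists>K < m. a = 1 \<and> b = K * c + 2
        \<or> (\<exists>p. 2 \<le> p \<and> p \<le> c \<and> a = K * c + p \<and> b = K * c + p + 1)
        \<or> a = K * c + c + 1 \<and> b = 1)"
proof -
  have "(a, b) \<in> windmill_edges m (Suc c) \<longleftrightarrow>
     (\<exists>k. k \<in> {1..m} \<and> (a = 1 \<and> b = (k - 1) * c + 2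
        \<or> (\<exists>p. 2 \<le> p \<and> p \<le> c \<and> a = (k - 1) * c + p \<and> b = (k - 1) * c + p + 1)
        \<or> a = (k - 1) * c + c + 1 \<and> b = 1))"
    unfolding windmill_edges_def by auto
  then show ?thesis
    unfolding ex_atLeastAtMost_1_shift[symmetric] .
qed

context
  fixes m c :: nat
  assumes c: "0 < c"
begin

private abbreviation D :: "(nat \<times> nat) set" where
  "D \<equiv> windmill_edges m (Suc c)"

lemma blade_position_unique:
  assumes "K * c + p = K' * c + p'" "2 \<le> p" "p \<le> Suc c" "2 \<le> p'" "p' \<le> Suc c"
  shows "K = K' \<and> p = p'"
  using mult_add_eq_mult_add_imp_eq[of K c "p - 2" K' "p' - 2"] assms by simp

lemma windmill_successors_hub: "D `` {1} = (\<lambda>K. K * c + 2) ` {..<m}"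
  using c by (auto simp: mem_windmill_edges)

lemma windmill_successors_blade:
  assumes K: "K < m" and p: "2 \<le> p" "p \<le> Suc c"
  shows "D `` {K * c + p} = {if p = Suc c then 1 else K * c + p + 1}"
proof (intro equalityI subsetI)
  fix w assume "w \<in> D `` {K * c + p}"
  then obtain K' where "K' < m" and
      "K * c + p = 1 \<and> w = K' * c + 2
       \<or> (\<exists>p'. 2 \<le> p' \<and> p' \<le> c \<and> K * c + p = K' * c + p' \<and> w = K' * c + p' + 1)
       \<or> K * c + p = K' * c + Suc c \<and> w = 1"
    by (auto simp: mem_windmill_edges)
  then show "w \<in> {if p = Suc c then 1 else K * c + p + 1}"
    using p blade_position_unique[of K p K'] by auto
next
  fix w assume "w \<in> {if p = Suc c then 1 else K * c + p + 1}"
  then show "w \<in> D `` {K * c + p}"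
    using K p by (auto simp: mem_windmill_edges)
qed

lemma card_walks_blade_to_hub:
  assumes K: "K < m" and p: "2 \<le> p" "p \<le> Suc c"
  shows "card (walks D (L + (Suc (Suc c) - p)) (K * c + p) j) = card (walks D L 1 j)"
  using p(2,1)
proof (induction p rule: inc_induct)
  case base
  show ?case
    using card_walks_Suc_unique_successor[OF finite_windmill_edges]
      windmill_successors_blade[OF K, of "Suc c"] c by simp
next
  case (step p)
  have "L + (Suc (Suc c) - p) = Suc (L + (Suc (Suc c) - Suc p))"
    using step.hyps by simp
  then show ?case
    using card_walks_Suc_unique_successor[OF finite_windmill_edges]
      windmill_successors_blade[OF K step.prems] step.hyps step.IH step.prems by simp
qed

lemma card_walks_hub_to_hub:
  "card (walks D (L + Suc c) 1 j) = m * card (walks D L 1 j)"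
proof -
  have inj: "inj_on (\<lambda>K. K * c + 2) {..<m}"
    using c by (auto simp: inj_on_def)
  have "card (walks D (L + Suc c) 1 j) = (\<Sum>v \<in> D `` {1}. card (walks D (L + c) v j))"
    using card_walks_Suc[OF finite_windmill_edges[of m "Suc c"], of "L + c"] by simp
  also have "\<dots> = (\<Sum>K<m. card (walks D (L + c) (K * c + 2) j))"
    unfolding windmill_successors_hub using inj by (simp add: sum.reindex)
  also have "\<dots> = (\<Sum>K<m. card (walks D L 1 j))"
    using card_walks_blade_to_hub[of _ 2 L j] c by simp
  finally show ?thesis by simp
qed

lemma windmill_distance_to_hub:
  assumes "i \<in> windmill_verts m (Suc c)"
  obtains d where "d \<le> c" "\<And>L. card (walks D (L + d) i j) = card (walks D L 1 j)"
proof (cases "i = 1")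
  case True
  then show ?thesis using that[of 0] by simp
next
  case False
  define K where "K = (i - 2) div c"
  define p where "p = (i - 2) mod c + 2"
  have "2 \<le> i" "i \<le> m * c + 1"
    using assms False by (auto simp: windmill_verts_def)
  then have "i = K * c + p" "K < m"
    using c by (auto simp: K_def p_def less_mult_imp_div_less)
  moreover have "2 \<le> p" "p \<le> Suc c"
    using c by (auto simp: p_def Suc_le_eq)
  ultimately show ?thesis
    using that[of "Suc (Suc c) - p"] card_walks_blade_to_hub by simp
qed

end

theorem proposition2p7:
  fixes m n i j :: nat
  assumes "m \<ge> 1" and "n \<ge> 3"
    and "i \<in> windmill_verts m n" and "j \<in> windmill_verts m n"
  shows "card (walks (windmill_edges m n) (2 * n - 1) i j)
           = m * card (walks (windmill_edges m n) (n - 1) i j)"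
proof -
  let ?W = "\<lambda>L v. card (walks (windmill_edges m n) L v j)"
  define c where "c = n - 1"
  have c: "0 < c" and n: "n = Suc c"
    using assms(2) by (simp_all add: c_def)
  obtain d where "d \<le> c" and d: "\<And>L. ?W (L + d) i = ?W L 1"
    using windmill_distance_to_hub[OF c] assms(3) n by metis
  have len: "2 * n - 1 = (c - d + Suc c) + d" "n - 1 = (c - d) + d"
    using \<open>d \<le> c\<close> n by simp_all
  have "?W (2 * n - 1) i = ?W (c - d + Suc c) 1"
    unfolding len(1) by (rule d)
  also have "\<dots> = m * ?W (c - d) 1"
    using card_walks_hub_to_hub[OF c] n by simp
  also have "?W (c - d) 1 = ?W (n - 1) i"
    unfolding len(2) by (rule d[symmetric])
  finally show ?thesis .
qed

end
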